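(* Let $E$ be a linear subspace of $\mathbb{R}^n$ and $p_E$ the orthogonal projection onto $E$. Let $\mu$ be a Borel probability measure on $\mathbb{R}^n$ and $\nu$ a Borel probability measure on $E$. Let $\rho=(\mathrm{Id}\times p_E)_\#\mu$ (a transference plan between $\mu$ and $(p_E)_\#\mu$) and let $\sigma$ be an optimal transference plan between $(p_E)_\#\mu$ and $\nu$ for the quadratic cost. If $\mathrm{Spt}((p_E)_\#\mu)$ is compact, then for every gluing $\Gamma$ of $\rho$ and $\sigma$, the measure $\pi^{13}_\#\Gamma$ is an optimal transference plan between $\mu$ and $\nu$ for the quadratic cost $|x-z|^2$.
   Context: Transference plans between probability measures $\mu_1,\mu_2$ are probability measures on the product with marginals $\mu_1,\mu_2$; optimal for the quadratic cost means minimizing $\int|x-y|^2\,d\rho(x,y)$ among them. Given probability measures $\mu_i$ on $X_i$ ($i=1,2,3$), a transference plan $\rho_{12}$ between $\mu_1,\mu_2$ and $\rho_{23}$ between $\mu_2,\mu_3$, a gluing of $\rho_{12}$ and $\rho_{23}$ is a probability measure $\Gamma$ on $X_1\times X_2\times X_3$ whose marginals on $X_1\times X_2$ and $X_2\times X_3$ are $\rho_{12}$ and $\rho_{23}$. Here $\pi^{13}(x_1,x_2,x_3)=(x_1,x_3)$. Here $X_1=\mathbb{R}^n$, $X_2=X_3=E$. *)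

theory Defs
  imports "HOL-Analysis.Analysis" "HOL-Probability.Probability"
begin

definition orth_proj :: "'a::euclidean_space set \<Rightarrow> 'a \<Rightarrow> 'a" where
  "orth_proj E x = (THE y. y \<in> E \<and> (\<forall>e\<in>E. (x - y) \<bullet> e = 0))"

definition borel_prob :: "'a::topological_space measure \<Rightarrow> bool" where
  "borel_prob M \<longleftrightarrow> prob_space M \<and> sets M = sets borel"

definition measure_support :: "'a::topological_space measure \<Rightarrow> 'a set" where
  "measure_support M = {x. \<forall>U. open U \<and> x \<in> U \<longrightarrow> emeasure M U > 0}"

definition transference_plan ::
  "'a::topological_space measure \<Rightarrow> 'b::topological_space measure \<Rightarrow> ('a \<times> 'b) measure \<Rightarrow> bool" where
  "transference_plan \<mu>1 \<mu>2 \<rho> \<longleftrightarrow> borel_prob \<rho> \<and>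
     distr \<rho> borel fst = \<mu>1 \<and> distr \<rho> borel snd = \<mu>2"

definition quad_cost :: "('a::real_normed_vector \<times> 'a) measure \<Rightarrow> ennreal" where
  "quad_cost \<rho> = (\<integral>\<^sup>+ p. ennreal ((norm (fst p - snd p))\<^sup>2) \<partial>\<rho>)"

definition optimal_plan ::
  "'a::{real_normed_vector,topological_space} measure \<Rightarrow> 'a measure \<Rightarrow> ('a \<times> 'a) measure \<Rightarrow> bool" where
  "optimal_plan \<mu>1 \<mu>2 \<rho> \<longleftrightarrow> transference_plan \<mu>1 \<mu>2 \<rho> \<and>
     (\<forall>\<rho>'. transference_plan \<mu>1 \<mu>2 \<rho>' \<longrightarrow> quad_cost \<rho> \<le> quad_cost \<rho>')"

definition gluing ::
  "('a::topological_space \<times> 'b::topological_space) measure \<Rightarrow> ('b \<times> 'c::topological_space) measure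
     \<Rightarrow> ('a \<times> 'b \<times> 'c) measure \<Rightarrow> bool" where
  "gluing \<rho>12 \<rho>23 \<Gamma> \<longleftrightarrow> borel_prob \<Gamma> \<and>
     distr \<Gamma> borel (\<lambda>(x1, x2, x3). (x1, x2)) = \<rho>12 \<and>
     distr \<Gamma> borel (\<lambda>(x1, x2, x3). (x2, x3)) = \<rho>23"

end

theory Submission
  imports Defs
begin

(* Write p for the orthogonal projection onto the subspace E.
   Since x - p x is orthogonal to E, Pythagoras gives |x - z|^2 = |x - p x|^2 + |p x - z|^2
   for every z in E.  Hence any plan rho' between mu and a measure nu concentrated on E has cost
     cost rho' = A + cost ((p x id)_# rho'),   A = integral of |x - p x|^2 d mu,
   and (p x id)_# rho' is a plan between p_# mu and nu, so cost rho' >= A + cost sigma.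
   For the composed plan pi = pi13_# Gamma the same identity holds, and (p x id)_# pi = sigma
   because Gamma-almost surely the middle coordinate equals p of the first one. *)

section \<open>Orthogonal projection onto a subspace\<close>

lemma orth_residual_unique:
  fixes E :: "'a::euclidean_space set"
  assumes "subspace E" "y \<in> E" "y' \<in> E"
    and "\<forall>e\<in>E. (x - y) \<bullet> e = 0" "\<forall>e\<in>E. (x - y') \<bullet> e = 0"
  shows "y' = y"
proof -
  have d: "y - y' \<in> E" using assms by (simp add: subspace_diff)
  have "(x - y') \<bullet> (y - y') - (x - y) \<bullet> (y - y') = 0" using assms d by simp
  hence "(y - y') \<bullet> (y - y') = 0" by (simp add: algebra_simps inner_diff_left inner_diff_right)
  thus ?thesis by simp
qed

lemma orth_proj_char:
  fixes E :: "'a::euclidean_space set"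
  assumes "subspace E"
  shows "orth_proj E x \<in> E \<and> (\<forall>e\<in>E. (x - orth_proj E x) \<bullet> e = 0)"
proof -
  obtain y z where y: "y \<in> span E" and z: "\<And>w. w \<in> span E \<Longrightarrow> orthogonal z w"
    and xyz: "x = y + z"
    using orthogonal_subspace_decomp_exists by blast
  have sE: "span E = E" using assms by (simp add: span_eq_iff)
  have P: "y \<in> E \<and> (\<forall>e\<in>E. (x - y) \<bullet> e = 0)"
    using y z xyz unfolding sE by (auto simp: orthogonal_def)
  have "orth_proj E x = y" unfolding orth_proj_def
    using P orth_residual_unique[OF assms] by (intro the_equality) blast+
  with P show ?thesis by simp
qed

lemma orth_proj_eqI:
  fixes E :: "'a::euclidean_space set"
  assumes "subspace E" "y \<in> E" "\<forall>e\<in>E. (x - y) \<bullet> e = 0"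
  shows "orth_proj E x = y"
  using orth_residual_unique[OF assms(1,2) _ assms(3)] orth_proj_char[OF assms(1)] by blast

lemma orth_proj_linear:
  fixes E :: "'a::euclidean_space set"
  assumes "subspace E"
  shows "linear (orth_proj E)"
proof
  fix a b
  show "orth_proj E (a + b) = orth_proj E a + orth_proj E b"
    using orth_proj_char[OF assms, of a] orth_proj_char[OF assms, of b] assms
    by (intro orth_proj_eqI)
       (auto simp: subspace_add algebra_simps inner_diff_left inner_add_left)
next
  fix c :: real and a
  show "orth_proj E (c *\<^sub>R a) = c *\<^sub>R orth_proj E a"
    using orth_proj_char[OF assms, of a] assms
    by (intro orth_proj_eqI) (auto simp: subspace_scale algebra_simps inner_diff_left)
qed

lemma orth_proj_continuous:
  fixes E :: "'a::euclidean_space set"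
  assumes "subspace E"
  shows "continuous_on UNIV (orth_proj E)"
  using orth_proj_linear[OF assms] by (intro linear_continuous_on) (simp add: linear_conv_bounded_linear)

lemma orth_proj_pythagoras:
  fixes E :: "'a::euclidean_space set"
  assumes "subspace E" "z \<in> E"
  shows "(norm (x - z))\<^sup>2 = (norm (x - orth_proj E x))\<^sup>2 + (norm (orth_proj E x - z))\<^sup>2"
proof -
  have "orthogonal (x - orth_proj E x) (orth_proj E x - z)"
    using orth_proj_char[OF assms(1), of x] assms by (auto simp: orthogonal_def subspace_diff)
  from norm_add_Pythagorean[OF this] show ?thesis by simp
qed

section \<open>Push-forwards, marginals and gluings of plans\<close>

lemma continuous_measurable:
  fixes g :: "'a::topological_space \<Rightarrow> 'b::topological_space"
  assumes "continuous_on UNIV g" "sets M = sets borel"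
  shows "g \<in> measurable M borel"
proof -
  have "measurable M (borel :: 'b measure) = measurable borel borel"
    by (rule measurable_cong_sets[OF assms(2) refl])
  thus ?thesis using borel_measurable_continuous_onI[OF assms(1)] by simp
qed

lemma AE_snd_in:
  fixes M :: "('a::topological_space \<times> 'b::topological_space) measure"
  assumes "sets M = sets borel" "prob_space M" "emeasure (distr M borel snd) E = 1" "E \<in> sets borel"
  shows "AE q in M. snd q \<in> E"
proof -
  have m: "snd \<in> measurable M borel"
    by (rule continuous_measurable[OF _ assms(1)]) (intro continuous_intros)
  have "prob_space (distr M borel snd)" by (rule prob_space.prob_space_distr[OF assms(2) m])
  moreover have "measure (distr M borel snd) E = 1" using assms(3) by (simp add: measure_def)
  ultimately have "AE x in distr M borel snd. x \<in> E" using prob_space.AE_prob_1 by blast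
  thus ?thesis using AE_distr_iff[OF m, of "\<lambda>x. x \<in> E"] assms(4) by simp
qed

lemma transference_plan_push_fst:
  fixes f :: "'a::topological_space \<Rightarrow> 'c::topological_space"
    and \<rho> :: "('a \<times> 'b::topological_space) measure"
  assumes plan: "transference_plan \<mu> \<nu> \<rho>" and f: "continuous_on UNIV f"
  shows "transference_plan (distr \<mu> borel f) \<nu> (distr \<rho> borel (\<lambda>(x, y). (f x, y)))"
proof -
  have s: "sets \<rho> = sets borel" "prob_space \<rho>"
    and marg: "distr \<rho> borel fst = \<mu>" "distr \<rho> borel snd = \<nu>"
    using plan by (auto simp: transference_plan_def borel_prob_def)
  have mT: "(\<lambda>(x, y). (f x, y)) \<in> measurable \<rho> borel" unfolding case_prod_unfold
    by (rule continuous_measurable[OF _ s(1)])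
       (intro continuous_intros continuous_on_compose2[OF f] | simp)+
  have mfst: "fst \<in> measurable \<rho> borel" "fst \<in> measurable (borel :: ('c \<times> 'b) measure) borel"
    by (rule continuous_measurable; (intro continuous_intros s(1) refl))+
  have msnd: "snd \<in> measurable (borel :: ('c \<times> 'b) measure) borel"
    by (rule continuous_measurable) (intro continuous_intros refl)+
  have mf: "f \<in> measurable (borel :: 'a measure) borel" by (rule continuous_measurable[OF f refl])
  have "distr (distr \<rho> borel (\<lambda>(x, y). (f x, y))) borel fst = distr \<rho> borel (f \<circ> fst)"
    using distr_distr[OF mfst(2) mT] by (simp add: comp_def case_prod_unfold)
  also have "\<dots> = distr \<mu> borel f" using distr_distr[OF mf mfst(1)] marg(1) by simp
  finally have 1: "distr (distr \<rho> borel (\<lambda>(x, y). (f x, y))) borel fst = distr \<mu> borel f" .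
  have 2: "distr (distr \<rho> borel (\<lambda>(x, y). (f x, y))) borel snd = \<nu>"
    using distr_distr[OF msnd mT] marg(2) by (simp add: comp_def case_prod_unfold)
  show ?thesis unfolding transference_plan_def borel_prob_def
    using 1 2 prob_space.prob_space_distr[OF s(2) mT] by simp
qed

lemma gluing_outer_plan:
  fixes \<Gamma> :: "('a::topological_space \<times> 'b::topological_space \<times> 'c::topological_space) measure"
  assumes glue: "gluing \<rho>12 \<rho>23 \<Gamma>"
    and "distr \<rho>12 borel fst = \<mu>1" "distr \<rho>23 borel snd = \<mu>3"
  shows "transference_plan \<mu>1 \<mu>3 (distr \<Gamma> borel (\<lambda>(x1, x2, x3). (x1, x3)))"
proof -
  have G: "prob_space \<Gamma>" "sets \<Gamma> = sets borel"
    and G12: "distr \<Gamma> borel (\<lambda>(x1, x2, x3). (x1, x2)) = \<rho>12"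
    and G23: "distr \<Gamma> borel (\<lambda>(x1, x2, x3). (x2, x3)) = \<rho>23"
    using glue by (auto simp: gluing_def borel_prob_def)
  have m: "(\<lambda>(x1, x2, x3). (x1, x3)) \<in> measurable \<Gamma> borel"
          "(\<lambda>(x1, x2, x3). (x1, x2)) \<in> measurable \<Gamma> borel"
          "(\<lambda>(x1, x2, x3). (x2, x3)) \<in> measurable \<Gamma> borel"
    unfolding case_prod_unfold by (rule continuous_measurable[OF _ G(2)], intro continuous_intros)+
  have fst: "fst \<in> measurable (borel :: ('a \<times> 'c) measure) borel"
            "fst \<in> measurable (borel :: ('a \<times> 'b) measure) borel"
    and snd: "snd \<in> measurable (borel :: ('a \<times> 'c) measure) borel"
             "snd \<in> measurable (borel :: ('b \<times> 'c) measure) borel"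
    by (rule continuous_measurable, intro continuous_intros, rule refl)+
  have "distr (distr \<Gamma> borel (\<lambda>(x1, x2, x3). (x1, x3))) borel fst
        = distr (distr \<Gamma> borel (\<lambda>(x1, x2, x3). (x1, x2))) borel fst"
    unfolding distr_distr[OF fst(1) m(1)] distr_distr[OF fst(2) m(2)]
    by (rule distr_cong) (auto simp: split_beta)
  moreover have "distr (distr \<Gamma> borel (\<lambda>(x1, x2, x3). (x1, x3))) borel snd
        = distr (distr \<Gamma> borel (\<lambda>(x1, x2, x3). (x2, x3))) borel snd"
    unfolding distr_distr[OF snd(1) m(1)] distr_distr[OF snd(2) m(3)]
    by (rule distr_cong) (auto simp: split_beta)
  ultimately show ?thesis using assms(2,3) G12 G23 prob_space.prob_space_distr[OF G(1) m(1)]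
    by (simp add: transference_plan_def borel_prob_def)
qed

text \<open>If the first plan of a gluing is the graph plan \<open>(Id \<times> f)\<^sub>#\<mu>\<close>, then the middle point is
  f of the first one almost surely, so moving the first point of the composed plan by f
  gives back the second plan.\<close>
lemma gluing_graph_collapse:
  fixes f :: "'a::t2_space \<Rightarrow> 'b::t2_space" and \<Gamma> :: "('a \<times> 'b \<times> 'c::t2_space) measure"
  assumes glue: "gluing (distr \<mu> borel (\<lambda>x. (x, f x))) \<sigma> \<Gamma>"
    and f: "continuous_on UNIV f" and \<mu>: "sets \<mu> = sets borel"
  shows "distr (distr \<Gamma> borel (\<lambda>(x1, x2, x3). (x1, x3))) borel (\<lambda>(x, z). (f x, z)) = \<sigma>"
proof -
  have G: "sets \<Gamma> = sets borel"
    and G12: "distr \<Gamma> borel (\<lambda>(x1, x2, x3). (x1, x2)) = distr \<mu> borel (\<lambda>x. (x, f x))"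
    and G23: "distr \<Gamma> borel (\<lambda>(x1, x2, x3). (x2, x3)) = \<sigma>"
    using glue by (auto simp: gluing_def borel_prob_def)
  have fc: "continuous_on UNIV (\<lambda>x. f (h x))" if "continuous_on UNIV h" for h :: "'z::topological_space \<Rightarrow> 'a"
    using continuous_on_compose2[OF f that] by simp
  have m: "(\<lambda>(x1, x2, x3). (x1, x3)) \<in> measurable \<Gamma> borel"
          "(\<lambda>(x1, x2, x3). (x1, x2)) \<in> measurable \<Gamma> borel"
          "(\<lambda>(x1, x2, x3). (x2, x3)) \<in> measurable \<Gamma> borel"
          "(\<lambda>(x1, x2, x3). (f x1, x3)) \<in> measurable \<Gamma> borel"
    unfolding case_prod_unfold
    by (rule continuous_measurable[OF _ G], intro continuous_intros fc)+
  have mgr: "(\<lambda>x. (x, f x)) \<in> measurable \<mu> borel"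
    by (rule continuous_measurable[OF _ \<mu>]) (intro continuous_intros fc)
  have mT: "(\<lambda>(x, z). (f x, z)) \<in> measurable (borel :: ('a \<times> 'c) measure) borel"
    unfolding case_prod_unfold by (rule continuous_measurable, intro continuous_intros fc, rule refl)
  have graph: "{q \<in> space borel. snd q = f (fst q)} \<in> sets (borel :: ('a \<times> 'b) measure)"
    by (simp, rule borel_closed, rule closed_Collect_eq) (auto intro!: continuous_intros fc)
  have "AE q in distr \<Gamma> borel (\<lambda>(x1, x2, x3). (x1, x2)). snd q = f (fst q)"
    unfolding G12 using AE_distr_iff[OF mgr graph] by simp
  hence middle: "AE w in \<Gamma>. fst (snd w) = f (fst w)"
    using AE_distr_iff[OF m(2) graph] by (simp add: split_beta)
  have "distr (distr \<Gamma> borel (\<lambda>(x1, x2, x3). (x1, x3))) borel (\<lambda>(x, z). (f x, z))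
        = distr \<Gamma> borel (\<lambda>(x1, x2, x3). (f x1, x3))"
    using distr_distr[OF mT m(1)] by (simp add: comp_def case_prod_unfold)
  also have "\<dots> = distr \<Gamma> borel (\<lambda>(x1, x2, x3). (x2, x3))"
    using middle by (intro distr_cong_AE[OF refl refl _ m(4) m(3)]) (auto simp: split_beta)
  finally show ?thesis using G23 by simp
qed

lemma graph_plan_fst:
  fixes f :: "'a::topological_space \<Rightarrow> 'b::topological_space"
  assumes "continuous_on UNIV f" "sets \<mu> = sets borel"
  shows "distr (distr \<mu> borel (\<lambda>x. (x, f x))) borel fst = \<mu>"
proof -
  have gr: "(\<lambda>x. (x, f x)) \<in> measurable \<mu> borel"
    by (rule continuous_measurable[OF _ assms(2)]) (intro continuous_intros assms(1))
  have fst: "fst \<in> measurable (borel :: ('a \<times> 'b) measure) borel"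
    by (rule continuous_measurable) (intro continuous_intros refl)+
  show ?thesis using distr_distr[OF fst gr] distr_id2[OF assms(2)[symmetric]] by (simp add: comp_def)
qed

section \<open>Cost decomposition through the projection\<close>

lemma quad_cost_distr:
  fixes g :: "'z \<Rightarrow> 'a::real_normed_vector \<times> 'a"
  assumes "g \<in> measurable M borel"
  shows "quad_cost (distr M borel g) = (\<integral>\<^sup>+ w. ennreal ((norm (fst (g w) - snd (g w)))\<^sup>2) \<partial>M)"
proof -
  have "(\<lambda>q. (norm (fst q - snd q))\<^sup>2) \<in> borel_measurable (distr M borel g)"
    by (rule continuous_measurable) (auto intro!: continuous_intros)
  then have "(\<lambda>q. ennreal ((norm (fst q - snd q))\<^sup>2)) \<in> borel_measurable (distr M borel g)"
    by (rule measurable_compose[OF _ measurable_ennreal])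
  then show ?thesis unfolding quad_cost_def by (rule nn_integral_distr[OF assms])
qed

lemma quad_cost_split:
  fixes E :: "'a::euclidean_space set" and \<rho> :: "('a \<times> 'a) measure"
  assumes E: "subspace E" and s: "sets \<rho> = sets borel" and conc: "AE q in \<rho>. snd q \<in> E"
  shows "quad_cost \<rho> = (\<integral>\<^sup>+ x. ennreal ((norm (x - orth_proj E x))\<^sup>2) \<partial>distr \<rho> borel fst)
                       + quad_cost (distr \<rho> borel (\<lambda>(x, y). (orth_proj E x, y)))"
proof -
  let ?p = "orth_proj E"
  have pc: "continuous_on UNIV (\<lambda>q. ?p (h q))" if "continuous_on UNIV h" for h :: "'a \<times> 'a \<Rightarrow> 'a"
    using continuous_on_compose2[OF orth_proj_continuous[OF E] that] by simp
  have mfst: "fst \<in> measurable \<rho> borel"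
    by (rule continuous_measurable[OF _ s]) (intro continuous_intros)
  have mT: "(\<lambda>(x, y). (?p x, y)) \<in> measurable \<rho> borel" unfolding case_prod_unfold
    by (rule continuous_measurable[OF _ s]) (intro continuous_intros pc)
  have "quad_cost \<rho> = (\<integral>\<^sup>+ q. ennreal ((norm (fst q - ?p (fst q)))\<^sup>2)
                              + ennreal ((norm (?p (fst q) - snd q))\<^sup>2) \<partial>\<rho>)"
    unfolding quad_cost_def
  proof (rule nn_integral_cong_AE)
    show "AE q in \<rho>. ennreal ((norm (fst q - snd q))\<^sup>2) = ennreal ((norm (fst q - ?p (fst q)))\<^sup>2)
                                          + ennreal ((norm (?p (fst q) - snd q))\<^sup>2)"
      using conc proof eventually_elim
      case (elim q)
      show ?case unfolding orth_proj_pythagoras[OF E elim, of "fst q"] by (rule ennreal_plus) auto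
    qed
  qed
  also have "\<dots> = (\<integral>\<^sup>+ q. ennreal ((norm (fst q - ?p (fst q)))\<^sup>2) \<partial>\<rho>)
                  + (\<integral>\<^sup>+ q. ennreal ((norm (?p (fst q) - snd q))\<^sup>2) \<partial>\<rho>)"
    by (rule nn_integral_add; rule measurable_compose[OF _ measurable_ennreal];
        rule continuous_measurable[OF _ s]; intro continuous_intros pc)
  also have "(\<integral>\<^sup>+ q. ennreal ((norm (fst q - ?p (fst q)))\<^sup>2) \<partial>\<rho>)
             = (\<integral>\<^sup>+ x. ennreal ((norm (x - ?p x))\<^sup>2) \<partial>distr \<rho> borel fst)"
    by (rule nn_integral_distr[OF mfst, symmetric], rule measurable_compose[OF _ measurable_ennreal],
        rule continuous_measurable, auto intro!: continuous_intros orth_proj_continuous[OF E])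
  also have "(\<integral>\<^sup>+ q. ennreal ((norm (?p (fst q) - snd q))\<^sup>2) \<partial>\<rho>)
             = quad_cost (distr \<rho> borel (\<lambda>(x, y). (?p x, y)))"
    by (subst quad_cost_distr[OF mT]) (simp add: case_prod_unfold)
  finally show ?thesis .
qed

theorem mainTheorem4:
  fixes E :: "(real ^ 'n) set"
    and \<mu> \<nu> :: "(real ^ 'n) measure"
    and \<sigma> :: "((real ^ 'n) \<times> (real ^ 'n)) measure"
    and \<Gamma> :: "((real ^ 'n) \<times> (real ^ 'n) \<times> (real ^ 'n)) measure"
  assumes "subspace E"
    and "borel_prob \<mu>"
    and "borel_prob \<nu>" and "emeasure \<nu> E = 1"
    and "optimal_plan (distr \<mu> borel (orth_proj E)) \<nu> \<sigma>"
    and "compact (measure_support (distr \<mu> borel (orth_proj E)))"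
    and "gluing (distr \<mu> borel (\<lambda>x. (x, orth_proj E x))) \<sigma> \<Gamma>"
  shows "optimal_plan \<mu> \<nu> (distr \<Gamma> borel (\<lambda>(x1, x2, x3). (x1, x3)))"
proof -
  define \<pi> where "\<pi> = distr \<Gamma> borel (\<lambda>(x1, x2, x3). (x1, x3))"
  define A where "A = (\<integral>\<^sup>+ x. ennreal ((norm (x - orth_proj E x))\<^sup>2) \<partial>\<mu>)"
  have Eb: "E \<in> sets borel" using \<open>subspace E\<close> by (simp add: closed_subspace)
  have \<sigma>: "transference_plan (distr \<mu> borel (orth_proj E)) \<nu> \<sigma>"
    using assms(5) by (simp add: optimal_plan_def)
  have cost_of_plan: "quad_cost \<rho> = A + quad_cost (distr \<rho> borel (\<lambda>(x, y). (orth_proj E x, y)))"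
    if "transference_plan \<mu> \<nu> \<rho>" for \<rho>
    using that assms(4) Eb quad_cost_split[OF \<open>subspace E\<close>, of \<rho>] AE_snd_in[of \<rho> E]
    by (simp add: transference_plan_def borel_prob_def A_def)
  have \<pi>: "transference_plan \<mu> \<nu> \<pi>"
    unfolding \<pi>_def using assms(2) \<sigma>
    by (intro gluing_outer_plan[OF assms(7)] graph_plan_fst orth_proj_continuous \<open>subspace E\<close>)
       (simp_all add: borel_prob_def transference_plan_def)
  have "distr \<pi> borel (\<lambda>(x, y). (orth_proj E x, y)) = \<sigma>"
    unfolding \<pi>_def using assms(2)
    by (intro gluing_graph_collapse[OF assms(7)] orth_proj_continuous \<open>subspace E\<close>)
       (simp add: borel_prob_def)
  hence cost_\<pi>: "quad_cost \<pi> = A + quad_cost \<sigma>" using cost_of_plan[OF \<pi>] by simp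
  have "quad_cost \<pi> \<le> quad_cost \<rho>" if \<rho>: "transference_plan \<mu> \<nu> \<rho>" for \<rho>
  proof -
    have "quad_cost \<sigma> \<le> quad_cost (distr \<rho> borel (\<lambda>(x, y). (orth_proj E x, y)))"
      using assms(5) transference_plan_push_fst[OF \<rho> orth_proj_continuous[OF \<open>subspace E\<close>]]
      by (simp add: optimal_plan_def)
    thus ?thesis unfolding cost_\<pi> cost_of_plan[OF \<rho>] by (rule add_left_mono)
  qed
  with \<pi> show ?thesis unfolding optimal_plan_def \<pi>_def by blast
qed

end
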